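(* Let $n$ be a positive even integer, $Q=[-1,1]^2$, $C_n=\frac{8}{(n+2)(n+3)}$, and let $MP_n=\{(x_m,y_{m,k}) : m=1,\dots,n+1,\ k=1,\dots,\tfrac n2+1\}$ be the Morrow-Patterson points, where $x_m=\cos\frac{m\pi}{n+2}$ and $y_{m,k}=\cos\frac{2k\pi}{n+3}$ if $m$ is odd, $y_{m,k}=\cos\frac{(2k-1)\pi}{n+3}$ if $m$ is even. Then: (i) For every polynomial $p\in\mathbb{P}^2_{2n}$, $$\frac{4}{\pi^2}\int_Q p(x,y)\sqrt{1-x^2}\sqrt{1-y^2}\,dx\,dy = C_n\sum_{m=1}^{n+1}\sum_{k=1}^{\frac n2+1}(1-x_m^2)(1-y_{m,k}^2)\,p(x_m,y_{m,k}).$$ (ii) Consequently, if $\omega_{m,k}$ is defined by $\frac{1}{\omega_{m,k}}=\sum_{i=0}^n\sum_{j=0}^{n-i}U_i^2(x_m)U_j^2(y_{m,k})$, then $\omega_{m,k}=C_n(1-x_m^2)(1-y_{m,k}^2)$. (iii) The projection $\mathcal C(Q)\to\mathbb{P}^2_n$ with respect to the discrete inner product $(u,v)_\star=\frac{\pi^2}{4}\sum_{m,k}\omega_{m,k}u(x_m,y_{m,k})v(x_m,y_{m,k})$ is an interpolation operator with nodes $MP_n$: for $f\in\mathcal C(Q)$ the polynomial $$L_nf(x,y)=C_n\sum_{m=1}^{n+1}\sum_{k=1}^{\frac n2+1}(1-x_m^2)(1-y_{m,k}^2)f(x_m,y_{m,k})\sum_{i=0}^n\sum_{j=0}^{n-i}U_i(x_m)U_j(y_{m,k})U_i(x)U_j(y)$$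 satisfies $L_nf(x_m,y_{m,k})=f(x_m,y_{m,k})$ for all $m,k$. (iv) The Lebesgue function of interpolation at $MP_n$ is $$\lambda_n(x,y)=C_n\sum_{m=1}^{n+1}\sum_{k=1}^{\frac n2+1}(1-x_m^2)(1-y_{m,k}^2)\Big|\sum_{i=0}^n\sum_{j=0}^{n-i}U_i(x_m)U_j(y_{m,k})U_i(x)U_j(y)\Big|.$$
   Context: $\mathbb{P}^2_d$ is the space of real bivariate polynomials of total degree at most $d$; $\mathcal C(Q)$ is the space of continuous real functions on $Q$. $U_j$ is the Chebyshev polynomial of the second kind of degree $j$, $U_j(\cos\theta)=\frac{\sin((j+1)\theta)}{\sin\theta}$. The set $MP_n$ has $\binom{n+2}{2}=\dim\mathbb{P}^2_n$ points. The Lebesgue function of interpolation at a unisolvent node set $\{a_s\}$ for $\mathbb{P}^2_n$ is $\lambda(x,y)=\sum_s|\ell_s(x,y)|$, where $\ell_s\in\mathbb{P}^2_n$ are the Lagrange basis polynomials ($\ell_s(a_t)=\delta_{st}$). *)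

theory Defs
  imports "HOL-Analysis.Analysis"
begin

text \<open>Chebyshev polynomials of the second kind, U_0 = 1, U_1 = 2x,
  U_{j+2} = 2x U_{j+1} - U_j (so that U_j(cos t) = sin((j+1)t)/sin t).\<close>
fun chebU :: "nat \<Rightarrow> real \<Rightarrow> real" where
  "chebU 0 x = 1"
| "chebU (Suc 0) x = 2 * x"
| "chebU (Suc (Suc j)) x = 2 * x * chebU (Suc j) x - chebU j x"

definition poly2 :: "nat \<Rightarrow> (real \<times> real \<Rightarrow> real) set" where
  "poly2 d = {p. \<exists>c :: nat \<Rightarrow> nat \<Rightarrow> real.
      \<forall>x y. p (x, y) = (\<Sum>i\<le>d. \<Sum>j\<le>d - i. c i j * x ^ i * y ^ j)}"

definition Q :: "(real \<times> real) set" where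
  "Q = cbox (-1, -1) (1, 1)"

definition Cn :: "nat \<Rightarrow> real" where
  "Cn n = 8 / ((real n + 2) * (real n + 3))"

definition MP_idx :: "nat \<Rightarrow> (nat \<times> nat) set" where
  "MP_idx n = {1..n+1} \<times> {1..n div 2 + 1}"

definition MP_x :: "nat \<Rightarrow> nat \<Rightarrow> real" where
  "MP_x n m = cos (real m * pi / (real n + 2))"

definition MP_y :: "nat \<Rightarrow> nat \<Rightarrow> nat \<Rightarrow> real" where
  "MP_y n m k = (if odd m then cos (2 * real k * pi / (real n + 3))
                 else cos ((2 * real k - 1) * pi / (real n + 3)))"

definition MP_node :: "nat \<Rightarrow> nat \<times> nat \<Rightarrow> real \<times> real" where
  "MP_node n s = (MP_x n (fst s), MP_y n (fst s) (snd s))"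

definition Kn :: "nat \<Rightarrow> real \<times> real \<Rightarrow> real \<times> real \<Rightarrow> real" where
  "Kn n a z = (\<Sum>i\<le>n. \<Sum>j\<le>n - i.
      chebU i (fst a) * chebU j (snd a) * chebU i (fst z) * chebU j (snd z))"

definition omega :: "nat \<Rightarrow> nat \<times> nat \<Rightarrow> real" where
  "omega n s = 1 / (\<Sum>i\<le>n. \<Sum>j\<le>n - i.
      (chebU i (fst (MP_node n s)))\<^sup>2 * (chebU j (snd (MP_node n s)))\<^sup>2)"

definition dip :: "nat \<Rightarrow> (real \<times> real \<Rightarrow> real) \<Rightarrow> (real \<times> real \<Rightarrow> real) \<Rightarrow> real" where
  "dip n u v = pi\<^sup>2 / 4 * (\<Sum>s\<in>MP_idx n. omega n s * u (MP_node n s) * v (MP_node n s))"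

definition Ln :: "nat \<Rightarrow> (real \<times> real \<Rightarrow> real) \<Rightarrow> real \<times> real \<Rightarrow> real" where
  "Ln n f z = Cn n * (\<Sum>s\<in>MP_idx n.
      (1 - (fst (MP_node n s))\<^sup>2) * (1 - (snd (MP_node n s))\<^sup>2) * f (MP_node n s)
      * Kn n (MP_node n s) z)"

definition lagrange_basis :: "nat \<Rightarrow> (nat \<times> nat \<Rightarrow> real \<times> real \<Rightarrow> real) \<Rightarrow> bool" where
  "lagrange_basis n l \<longleftrightarrow> (\<forall>s\<in>MP_idx n. l s \<in> poly2 n) \<and>
     (\<forall>s\<in>MP_idx n. \<forall>t\<in>MP_idx n. l s (MP_node n t) = (if s = t then 1 else 0))"

definition lebesgue_fun :: "nat \<Rightarrow> (nat \<times> nat \<Rightarrow> real \<times> real \<Rightarrow> real) \<Rightarrow> real \<times> real \<Rightarrow> real" where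
  "lebesgue_fun n l z = (\<Sum>s\<in>MP_idx n. \<bar>l s z\<bar>)"

end

theory Submission
  imports Defs "Jordan_Normal_Form.Determinant"
begin

text \<open>
  Substituting \<open>x = cos \<theta>\<close> turns \<open>(1 - x\<^sup>2) U\<^sub>i(x) U\<^sub>i\<^sub>'(x)\<close> into
  \<open>sin ((i+1)\<theta>) sin ((i'+1)\<theta>)\<close>. The Morrow-Patterson nodes are exactly the points
  \<open>(cos (m\<pi>/(n+2)), cos (l\<pi>/(n+3)))\<close> with \<open>m + l\<close> odd, so every node sum of a product of
  Chebyshev polynomials, weighted by \<open>w = C\<^sub>n (1 - x\<^sup>2)(1 - y\<^sup>2)\<close>, splits into products of
  one-dimensional sums \<open>\<Sum>\<^sub>m sin (a m\<pi>/N) sin (c m\<pi>/N)\<close> and their alternating versions,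
  which have a closed form. This gives exactness of the cubature on the tensor basis
  \<open>U\<^sub>i(x) U\<^sub>j(y)\<close>, \<open>i + j \<le> 2n\<close> (hence (i): both sides only see the constant
  coefficient), and discrete orthonormality of this basis for \<open>i + j \<le> n\<close>. As there are as
  many nodes as basis functions, the orthonormality matrix is square, so its left inverse is also
  a right inverse: \<open>w\<^sub>t K\<^sub>n(a\<^sub>t, a\<^sub>s) = \<delta>\<^sub>s\<^sub>t\<close>. This Lagrange property yields
  \<open>\<omega> = w\<close>, the interpolation property of \<open>L\<^sub>n\<close> and the Lebesgue function.
\<close>

section \<open>Chebyshev polynomials of the second kind\<close>

lemma nat_two_step_induct [case_names 0 1 step]:
  assumes "P 0" and "P (Suc 0)" and "\<And>j. P j \<Longrightarrow> P (Suc j) \<Longrightarrow> P (Suc (Suc j))"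
  shows "P n"
proof -
  have "P n \<and> P (Suc n)" by (induction n) (use assms in auto)
  then show ?thesis ..
qed

lemma chebU_cos_times_sin: "chebU j (cos t) * sin t = sin (real (Suc j) * t)"
proof (induction j rule: nat_two_step_induct)
  case 0
  show ?case by simp
next
  case 1
  show ?case by (simp add: sin_double)
next
  case (step j)
  define a where "a = real (Suc (Suc j)) * t"
  have "chebU (Suc (Suc j)) (cos t) * sin t
      = 2 * cos t * (chebU (Suc j) (cos t) * sin t) - chebU j (cos t) * sin t"
    by (simp add: algebra_simps)
  also have "\<dots> = 2 * cos t * sin a - sin (a - t)"
    using step by (simp add: a_def algebra_simps)
  also have "\<dots> = sin (a + t)"
    by (simp add: sin_add sin_diff)
  finally show ?case
    by (simp add: a_def algebra_simps)
qed

lemma one_minus_cos_sq_chebU_chebU: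
  "(1 - (cos t)\<^sup>2) * (chebU i (cos t) * chebU i' (cos t)) = sin (real (Suc i) * t) * sin (real (Suc i') * t)"
proof -
  have "1 - (cos t)\<^sup>2 = sin t * sin t"
    using sin_squared_eq[of t] by (simp add: power2_eq_square)
  then have "(1 - (cos t)\<^sup>2) * (chebU i (cos t) * chebU i' (cos t))
      = (chebU i (cos t) * sin t) * (chebU i' (cos t) * sin t)"
    by (simp add: ac_simps)
  then show ?thesis
    by (simp only: chebU_cos_times_sin)
qed

definition span_upto :: "(nat \<Rightarrow> 'a \<Rightarrow> real) \<Rightarrow> nat \<Rightarrow> ('a \<Rightarrow> real) set" where
  "span_upto \<psi> i = {f. \<exists>e. \<forall>x. f x = (\<Sum>k\<le>i. e k * \<psi> k x)}"

lemma span_uptoI: "(\<And>x. f x = (\<Sum>k\<le>i. e k * \<psi> k x)) \<Longrightarrow> f \<in> span_upto \<psi> i"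
  unfolding span_upto_def by blast

lemma span_upto_add:
  assumes "f \<in> span_upto \<psi> i" and "g \<in> span_upto \<psi> i"
  shows "(\<lambda>x. f x + g x) \<in> span_upto \<psi> i"
proof -
  obtain e1 e2 where "\<forall>x. f x = (\<Sum>k\<le>i. e1 k * \<psi> k x)" and "\<forall>x. g x = (\<Sum>k\<le>i. e2 k * \<psi> k x)"
    using assms unfolding span_upto_def by blast
  then show ?thesis
    by (intro span_uptoI[where e = "\<lambda>k. e1 k + e2 k"]) (simp add: sum.distrib algebra_simps)
qed

lemma span_upto_scale:
  assumes "f \<in> span_upto \<psi> i"
  shows "(\<lambda>x. a * f x) \<in> span_upto \<psi> i"
proof -
  obtain e where "\<forall>x. f x = (\<Sum>k\<le>i. e k * \<psi> k x)"
    using assms unfolding span_upto_def by blast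
  then show ?thesis
    by (intro span_uptoI[where e = "\<lambda>k. a * e k"]) (simp add: sum_distrib_left ac_simps)
qed

lemma span_upto_sum:
  "finite A \<Longrightarrow> (\<And>a. a \<in> A \<Longrightarrow> f a \<in> span_upto \<psi> i) \<Longrightarrow> (\<lambda>x. \<Sum>a\<in>A. f a x) \<in> span_upto \<psi> i"
proof (induction A rule: finite_induct)
  case empty
  show ?case by (simp add: span_uptoI[where e = "\<lambda>_. 0"])
next
  case (insert a A)
  then show ?case using span_upto_add[of "f a" \<psi> i] by simp
qed

lemma span_upto_mono:
  assumes "f \<in> span_upto \<psi> i" and "i \<le> i'"
  shows "f \<in> span_upto \<psi> i'"
proof -
  obtain e where e: "\<forall>x. f x = (\<Sum>k\<le>i. e k * \<psi> k x)"
    using assms unfolding span_upto_def by blast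
  have "{..i'} \<inter> {k. k \<le> i} = {..i}" using assms(2) by auto
  then have "f x = (\<Sum>k\<le>i'. (if k \<le> i then e k else 0) * \<psi> k x)" for x
    by (simp add: e if_distrib[of "\<lambda>c. c * _"] sum.If_cases)
  then show ?thesis by (rule span_uptoI)
qed

lemma span_upto_basis: "k \<le> i \<Longrightarrow> \<psi> k \<in> span_upto \<psi> i"
  by (rule span_uptoI[where e = "\<lambda>j. if j = k then 1 else 0"])
     (simp add: if_distrib[of "\<lambda>c. c * _"] cong: if_cong)

lemma span_upto_monomials_times_x:
  assumes "f \<in> span_upto (\<lambda>k x. x ^ k) i"
  shows "(\<lambda>x. x * f x) \<in> span_upto (\<lambda>k x. x ^ k) (Suc i)"
proof -
  obtain e where "\<forall>x. f x = (\<Sum>k\<le>i. e k * x ^ k)"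
    using assms unfolding span_upto_def by blast
  then show ?thesis
    by (intro span_uptoI[where e = "\<lambda>k. if k = 0 then 0 else e (k - 1)"])
       (simp add: sum.atMost_Suc_shift sum_distrib_left algebra_simps del: sum.atMost_Suc)
qed

lemma chebU_in_span_monomials: "chebU j \<in> span_upto (\<lambda>k x. x ^ k) j"
proof (induction j rule: nat_two_step_induct)
  case 0
  show ?case by (rule span_uptoI[where e = "\<lambda>_. 1"]) simp
next
  case 1
  show ?case using span_upto_scale[OF span_upto_basis[of 1 1 "\<lambda>k x. x ^ k"], of 2]
    by (simp add: fun_eq_iff)
next
  case (step j)
  have "(\<lambda>x. 2 * (x * chebU (Suc j) x)) \<in> span_upto (\<lambda>k x. x ^ k) (Suc (Suc j))"
    by (rule span_upto_scale, rule span_upto_monomials_times_x, rule step(2))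
  moreover have "(\<lambda>x. (-1) * chebU j x) \<in> span_upto (\<lambda>k x. x ^ k) (Suc (Suc j))"
    by (rule span_upto_scale, rule span_upto_mono[OF step(1)]) simp
  moreover have "chebU (Suc (Suc j)) = (\<lambda>x. 2 * (x * chebU (Suc j) x) + (-1) * chebU j x)"
    by (simp add: fun_eq_iff)
  ultimately show ?case
    by (simp only: span_upto_add)
qed

lemma x_times_chebU_in_span_chebU: "(\<lambda>x. x * chebU k x) \<in> span_upto chebU (Suc k)"
proof (cases k)
  case 0
  then show ?thesis using span_upto_scale[OF span_upto_basis[of 1 1 chebU], of "1/2"]
    by (simp add: fun_eq_iff)
next
  case (Suc j)
  have "(\<lambda>x. (1/2) * chebU (Suc (Suc j)) x) \<in> span_upto chebU (Suc k)"
    and "(\<lambda>x. (1/2) * chebU j x) \<in> span_upto chebU (Suc k)"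
    using Suc by (intro span_upto_scale span_upto_basis; simp)+
  from span_upto_add[OF this] show ?thesis
    using Suc by (simp add: algebra_simps)
qed

lemma monomial_in_span_chebU: "(\<lambda>x. x ^ j) \<in> span_upto chebU j"
proof (induction j)
  case 0
  show ?case by (rule span_uptoI[where e = "\<lambda>_. 1"]) simp
next
  case (Suc j)
  then obtain e where e: "\<forall>x. x ^ j = (\<Sum>k\<le>j. e k * chebU k x)"
    unfolding span_upto_def by blast
  have "(\<lambda>x. \<Sum>k\<le>j. e k * (x * chebU k x)) \<in> span_upto chebU (Suc j)"
    by (intro span_upto_sum span_upto_scale span_upto_mono[OF x_times_chebU_in_span_chebU]) auto
  then show ?case
    using e by (simp add: sum_distrib_left algebra_simps)
qed

lemma continuous_on_chebU: "continuous_on S (chebU j)"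
proof -
  obtain e where "\<forall>x. chebU j x = (\<Sum>k\<le>j. e k * x ^ k)"
    using chebU_in_span_monomials[of j] unfolding span_upto_def by blast
  then have "chebU j = (\<lambda>x. \<Sum>k\<le>j. e k * x ^ k)" by auto
  moreover have "continuous_on S (\<lambda>x. \<Sum>k\<le>j. e k * x ^ k)"
    by (intro continuous_intros)
  ultimately show ?thesis by simp
qed

lemma continuous_on_chebU_comp [continuous_intros]:
  "continuous_on S f \<Longrightarrow> continuous_on S (\<lambda>x. chebU i (f x))"
  using continuous_on_compose[of S f "chebU i"] continuous_on_chebU by (simp add: comp_def)

section \<open>Bivariate polynomials in the tensor Chebyshev basis\<close>

definition tri_idx :: "nat \<Rightarrow> (nat \<times> nat) set" where
  "tri_idx d = (SIGMA i:{..d}. {..d - i})"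

lemma finite_tri_idx [simp]: "finite (tri_idx d)"
  by (simp add: tri_idx_def)

lemma mem_tri_idx_iff: "b \<in> tri_idx d \<longleftrightarrow> fst b + snd b \<le> d"
  by (cases b) (auto simp: tri_idx_def)

lemma sum_tri_idx: "(\<Sum>i\<le>d. \<Sum>j\<le>d - i. g i j) = (\<Sum>(i, j)\<in>tri_idx d. g i j)"
  unfolding tri_idx_def by (rule sum.Sigma) auto

definition tensor :: "(nat \<Rightarrow> real \<Rightarrow> real) \<Rightarrow> nat \<times> nat \<Rightarrow> real \<times> real \<Rightarrow> real" where
  "tensor \<phi> b z = \<phi> (fst b) (fst z) * \<phi> (snd b) (snd z)"

definition tensor_span :: "(nat \<Rightarrow> real \<Rightarrow> real) \<Rightarrow> nat \<Rightarrow> (real \<times> real \<Rightarrow> real) set" where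
  "tensor_span \<phi> d = {p. \<exists>c. \<forall>z. p z = (\<Sum>b\<in>tri_idx d. c b * tensor \<phi> b z)}"

lemma tensor_spanI: "(\<And>z. p z = (\<Sum>b\<in>tri_idx d. c b * tensor \<phi> b z)) \<Longrightarrow> p \<in> tensor_span \<phi> d"
  unfolding tensor_span_def by blast

lemma tensor_span_add:
  assumes "p \<in> tensor_span \<phi> d" and "q \<in> tensor_span \<phi> d"
  shows "(\<lambda>z. p z + q z) \<in> tensor_span \<phi> d"
proof -
  obtain c1 where "\<And>z. p z = (\<Sum>b\<in>tri_idx d. c1 b * tensor \<phi> b z)"
    using assms(1) unfolding tensor_span_def by blast
  moreover obtain c2 where "\<And>z. q z = (\<Sum>b\<in>tri_idx d. c2 b * tensor \<phi> b z)"
    using assms(2) unfolding tensor_span_def by blast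
  ultimately show ?thesis
    by (intro tensor_spanI[where c = "\<lambda>b. c1 b + c2 b"]) (simp add: sum.distrib algebra_simps)
qed

lemma tensor_span_scale:
  assumes "p \<in> tensor_span \<phi> d"
  shows "(\<lambda>z. a * p z) \<in> tensor_span \<phi> d"
proof -
  obtain c where "\<And>z. p z = (\<Sum>b\<in>tri_idx d. c b * tensor \<phi> b z)"
    using assms unfolding tensor_span_def by blast
  then show ?thesis
    by (intro tensor_spanI[where c = "\<lambda>b. a * c b"]) (simp add: sum_distrib_left ac_simps)
qed

lemma tensor_span_sum:
  "finite A \<Longrightarrow> (\<And>a. a \<in> A \<Longrightarrow> f a \<in> tensor_span \<phi> d) \<Longrightarrow> (\<lambda>z. \<Sum>a\<in>A. f a z) \<in> tensor_span \<phi> d"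
proof (induction A rule: finite_induct)
  case empty
  show ?case by (simp add: tensor_spanI[where c = "\<lambda>_. 0"])
next
  case (insert a A)
  then show ?case using tensor_span_add[of "f a" \<phi> d] by simp
qed

lemma tensor_span_linear_combination:
  "finite A \<Longrightarrow> (\<And>a. a \<in> A \<Longrightarrow> f a \<in> tensor_span \<phi> d) \<Longrightarrow> (\<lambda>z. \<Sum>a\<in>A. c a * f a z) \<in> tensor_span \<phi> d"
  by (rule tensor_span_sum) (auto intro: tensor_span_scale)

lemma tensor_span_basis: "b \<in> tri_idx d \<Longrightarrow> tensor \<phi> b \<in> tensor_span \<phi> d"
  by (rule tensor_spanI[where c = "\<lambda>a. if a = b then 1 else 0"])
     (simp add: if_distrib[of "\<lambda>c. c * _"] cong: if_cong)

lemma tensor_span_subset_tensor_span: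
  assumes "\<And>i. \<phi> i \<in> span_upto \<psi> i"
  shows "tensor_span \<phi> d \<subseteq> tensor_span \<psi> d"
proof
  fix p assume "p \<in> tensor_span \<phi> d"
  then obtain c where c: "\<And>z. p z = (\<Sum>b\<in>tri_idx d. c b * tensor \<phi> b z)"
    unfolding tensor_span_def by blast
  have "\<forall>i. \<exists>e. \<forall>x. \<phi> i x = (\<Sum>k\<le>i. e k * \<psi> k x)"
    using assms unfolding span_upto_def by blast
  then obtain E where E: "\<And>i x. \<phi> i x = (\<Sum>k\<le>i. E i k * \<psi> k x)"
    by metis
  have "tensor \<phi> b \<in> tensor_span \<psi> d" if b: "b \<in> tri_idx d" for b
  proof -
    have "tensor \<phi> b
        = (\<lambda>z. \<Sum>a\<in>{..fst b} \<times> {..snd b}. (E (fst b) (fst a) * E (snd b) (snd a)) * tensor \<psi> a z)"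
      by (simp add: fun_eq_iff tensor_def E sum_product sum.cartesian_product split_beta ac_simps)
    moreover have "\<dots> \<in> tensor_span \<psi> d"
      using b by (intro tensor_span_linear_combination tensor_span_basis) (auto simp: mem_tri_idx_iff)
    ultimately show ?thesis by simp
  qed
  then have "(\<lambda>z. \<Sum>b\<in>tri_idx d. c b * tensor \<phi> b z) \<in> tensor_span \<psi> d"
    by (simp add: tensor_span_linear_combination)
  then show "p \<in> tensor_span \<psi> d"
    by (simp add: c[abs_def])
qed

lemma poly2_eq_tensor_span_monomials: "poly2 d = tensor_span (\<lambda>k x. x ^ k) d"
proof -
  have "(\<exists>c. \<forall>x y. p (x, y) = (\<Sum>i\<le>d. \<Sum>j\<le>d - i. c i j * x ^ i * y ^ j))
    \<longleftrightarrow> (\<exists>c. \<forall>z. p z = (\<Sum>b\<in>tri_idx d. c b * tensor (\<lambda>k x. x ^ k) b z))" for p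
  proof
    assume "\<exists>c. \<forall>x y. p (x, y) = (\<Sum>i\<le>d. \<Sum>j\<le>d - i. c i j * x ^ i * y ^ j)"
    then obtain c where "\<forall>x y. p (x, y) = (\<Sum>i\<le>d. \<Sum>j\<le>d - i. c i j * x ^ i * y ^ j)" ..
    then have "\<forall>z. p z = (\<Sum>b\<in>tri_idx d. c (fst b) (snd b) * tensor (\<lambda>k x. x ^ k) b z)"
      by (simp add: sum_tri_idx tensor_def split_beta mult.assoc)
    then show "\<exists>c. \<forall>z. p z = (\<Sum>b\<in>tri_idx d. c b * tensor (\<lambda>k x. x ^ k) b z)"
      by (intro exI[of _ "\<lambda>b. c (fst b) (snd b)"]) simp
  next
    assume "\<exists>c. \<forall>z. p z = (\<Sum>b\<in>tri_idx d. c b * tensor (\<lambda>k x. x ^ k) b z)"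
    then obtain c where "\<forall>z. p z = (\<Sum>b\<in>tri_idx d. c b * tensor (\<lambda>k x. x ^ k) b z)" ..
    then have "\<forall>x y. p (x, y) = (\<Sum>i\<le>d. \<Sum>j\<le>d - i. c (i, j) * x ^ i * y ^ j)"
      by (simp add: sum_tri_idx tensor_def split_beta mult.assoc)
    then show "\<exists>c. \<forall>x y. p (x, y) = (\<Sum>i\<le>d. \<Sum>j\<le>d - i. c i j * x ^ i * y ^ j)"
      by (intro exI[of _ "\<lambda>i j. c (i, j)"]) simp
  qed
  then show ?thesis
    unfolding poly2_def tensor_span_def by blast
qed

lemma poly2_eq_tensor_span_chebU: "poly2 d = tensor_span chebU d"
  unfolding poly2_eq_tensor_span_monomials
  by (intro equalityI tensor_span_subset_tensor_span chebU_in_span_monomials monomial_in_span_chebU)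

lemma Kn_eq_sum_tensor_chebU: "Kn n a z = (\<Sum>b\<in>tri_idx n. tensor chebU b a * tensor chebU b z)"
  unfolding Kn_def sum_tri_idx by (simp add: tensor_def split_beta ac_simps)

lemma Kn_in_poly2: "Kn n a \<in> poly2 n"
  unfolding poly2_eq_tensor_span_chebU
  by (rule tensor_spanI[where c = "\<lambda>b. tensor chebU b a"]) (rule Kn_eq_sum_tensor_chebU)

section \<open>Discrete sine sums\<close>

lemma sin_half_times_sum_cos:
  "2 * sin (x / 2) * (\<Sum>m=1..M. cos (real m * x)) = sin ((real M + 1/2) * x) - sin (x / 2)"
proof (induction M)
  case 0
  show ?case by simp
next
  case (Suc M)
  have "2 * sin (x / 2) * cos (real (Suc M) * x)
      = sin (x / 2 + real (Suc M) * x) + sin (x / 2 - real (Suc M) * x)"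
    using sin_times_cos[of "x / 2" "real (Suc M) * x"] by simp
  also have "x / 2 + real (Suc M) * x = (real (Suc M) + 1/2) * x"
    by (simp add: algebra_simps)
  also have "x / 2 - real (Suc M) * x = - ((real M + 1/2) * x)"
    by (simp add: algebra_simps)
  finally have "2 * sin (x / 2) * cos (real (Suc M) * x)
      = sin ((real (Suc M) + 1/2) * x) - sin ((real M + 1/2) * x)"
    by simp
  then show ?case
    using Suc by (simp add: algebra_simps)
qed

lemma sum_cos_int_multiple_nodes:
  fixes d :: int
  assumes N: "N \<ge> 1"
  shows "(\<Sum>m=1..N-1. cos (of_int d * real m * pi / real N))
       = (if (2 * int N) dvd d then real N - 1 else if even d then -1 else 0)"
proof (cases "(2 * int N) dvd d")
  case True
  then obtain q where q: "d = 2 * int N * q" by blast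
  have "cos (of_int d * real m * pi / real N) = 1" for m
  proof -
    have "of_int d * real m * pi / real N = (2 * pi) * of_int (q * int m)"
      using N by (simp add: q field_simps)
    then show ?thesis by (metis cos_int_2pin)
  qed
  then show ?thesis using True N by simp
next
  case False
  define y where "y = of_int d * pi / (2 * real N)"
  define \<epsilon> :: real where "\<epsilon> = (if even d then 1 else -1)"
  have "sin y \<noteq> 0"
  proof
    assume "sin y = 0"
    then obtain i :: int where "y = of_int i * pi" using sin_zero_iff_int2 by blast
    then have "real_of_int d = real_of_int (i * (2 * int N))"
      using N by (simp add: y_def field_simps)
    then show False using False by (simp only: of_int_eq_iff) simp
  qed
  have "2 * sin y * (\<Sum>m=1..N-1. cos (real m * (2 * y))) = sin ((real (N-1) + 1/2) * (2 * y)) - sin y"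
    using sin_half_times_sum_cos[of "2 * y" "N-1"] by simp
  also have "(real (N-1) + 1/2) * (2 * y) = of_int d * pi - y"
    using N by (simp add: y_def of_nat_diff field_simps)
  also have "sin (of_int d * pi - y) = - \<epsilon> * sin y"
    by (simp add: \<epsilon>_def sin_diff cos_npi_int mult.commute[of _ pi])
  finally have "sin y * (2 * (\<Sum>m=1..N-1. cos (real m * (2 * y))) + (\<epsilon> + 1)) = 0"
    by (simp add: algebra_simps)
  with \<open>sin y \<noteq> 0\<close> have "2 * (\<Sum>m=1..N-1. cos (real m * (2 * y))) + (\<epsilon> + 1) = 0"
    by simp
  then have "(\<Sum>m=1..N-1. cos (real m * (2 * y))) = - (\<epsilon> + 1) / 2"
    by (simp add: field_simps)
  moreover have "(\<Sum>m=1..N-1. cos (real m * (2 * y))) = (\<Sum>m=1..N-1. cos (of_int d * real m * pi / real N))"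
    using N by (intro sum.cong refl) (simp add: y_def field_simps)
  ultimately show ?thesis
    using False by (cases "even d") (simp_all add: \<epsilon>_def)
qed

definition sin_prod_sum :: "nat \<Rightarrow> nat \<Rightarrow> nat \<Rightarrow> real" where
  "sin_prod_sum N a c = (\<Sum>m=1..N-1. sin (real a * real m * pi / real N) * sin (real c * real m * pi / real N))"

lemma sin_prod_sum_closed_form:
  assumes N: "N \<ge> 1"
  shows "sin_prod_sum N a c
    = (if (2 * int N) dvd (int a - int c) then real N / 2 else 0)
      - (if (2 * int N) dvd (int a + int c) then real N / 2 else 0)"
proof -
  have "sin_prod_sum N a c
     = ((\<Sum>m=1..N-1. cos (of_int (int a - int c) * real m * pi / real N))
       - (\<Sum>m=1..N-1. cos (of_int (int a + int c) * real m * pi / real N))) / 2"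
    unfolding sin_prod_sum_def sum_subtractf[symmetric] sum_divide_distrib
    by (intro sum.cong refl) (simp add: sin_times_sin algebra_simps add_divide_distrib diff_divide_distrib)
  moreover have even_if_dvd: "(2 * int N) dvd z \<Longrightarrow> even z" for z
    by (metis dvd_mult_left dvd_trans even_numeral)
  then have "(2 * int N) dvd (int a - int c) \<Longrightarrow> even a \<longleftrightarrow> even c"
    and "(2 * int N) dvd (int a + int c) \<Longrightarrow> even a \<longleftrightarrow> even c"
    using even_if_dvd[of "int a - int c"] even_if_dvd[of "int a + int c"] by simp_all
  ultimately show ?thesis
    unfolding sum_cos_int_multiple_nodes[OF N] by (auto simp: field_simps)
qed

lemma sin_prod_sum_eq_if:
  assumes "0 < a" and "0 < c" and "a + c < 2 * N"
  shows "sin_prod_sum N a c = (if a = c then real N / 2 else 0)"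
proof -
  have "(2 * int N) dvd (int a - int c) \<longleftrightarrow> a = c"
  proof
    assume "(2 * int N) dvd (int a - int c)"
    moreover have "\<bar>int a - int c\<bar> < \<bar>2 * int N\<bar>" using assms by linarith
    ultimately show "a = c"
      using dvd_imp_le_int[of "int a - int c" "2 * int N"] by fastforce
  qed simp
  moreover have "\<not> (2 * int N) dvd (int a + int c)"
    using assms by (intro zdvd_not_zless) auto
  ultimately show ?thesis
    using assms by (simp add: sin_prod_sum_closed_form)
qed

lemma sin_prod_sum_shift_eq_0:
  assumes "0 < a" and "0 < c" and "a + c < N"
  shows "sin_prod_sum N (a + N) c = 0"
proof -
  have "\<not> (2 * int N) dvd (int (a + N) - int c)" and "\<not> (2 * int N) dvd (int (a + N) + int c)"
    by (rule zdvd_not_zless; use assms in simp)+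
  then show ?thesis
    using assms by (simp add: sin_prod_sum_closed_form)
qed

lemma sum_chebU_products_cos_nodes:
  "(\<Sum>m=1..N-1. (1 - (cos (real m * pi / real N))\<^sup>2)
      * (chebU i (cos (real m * pi / real N)) * chebU i' (cos (real m * pi / real N))))
   = sin_prod_sum N (Suc i) (Suc i')"
  unfolding sin_prod_sum_def one_minus_cos_sq_chebU_chebU by (simp add: mult.assoc)

lemma sum_alternating_chebU_products_cos_nodes:
  assumes "N > 0"
  shows "(\<Sum>m=1..N-1. (-1) ^ m * ((1 - (cos (real m * pi / real N))\<^sup>2)
      * (chebU i (cos (real m * pi / real N)) * chebU i' (cos (real m * pi / real N)))))
   = sin_prod_sum N (Suc i + N) (Suc i')"
  unfolding sin_prod_sum_def one_minus_cos_sq_chebU_chebU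
proof (intro sum.cong refl)
  fix m
  have "real (Suc i + N) * real m * pi / real N = real (Suc i) * (real m * pi / real N) + real m * pi"
    using assms by (simp add: field_simps)
  then show "(-1) ^ m * (sin (real (Suc i) * (real m * pi / real N)) * sin (real (Suc i') * (real m * pi / real N)))
    = sin (real (Suc i + N) * real m * pi / real N) * sin (real (Suc i') * real m * pi / real N)"
    by (simp add: sin_add mult.assoc)
qed

lemma sum_even_indices:
  fixes h :: "nat \<Rightarrow> 'a::comm_monoid_add"
  shows "(\<Sum>l=1..2*r. if even l then h l else 0) = (\<Sum>k=1..r. h (2 * k))"
  by (induction r) simp_all

lemma sum_odd_indices:
  fixes h :: "nat \<Rightarrow> 'a::comm_monoid_add"
  shows "(\<Sum>l=1..2*r. if odd l then h l else 0) = (\<Sum>k=1..r. h (2 * k - 1))"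
  by (induction r) simp_all

lemma sum_odd_pairs_product:
  fixes f g :: "nat \<Rightarrow> real"
  shows "(\<Sum>m\<in>A. \<Sum>l\<in>B. if odd (m + l) then f m * g l else 0)
     = ((\<Sum>m\<in>A. f m) * (\<Sum>l\<in>B. g l) - (\<Sum>m\<in>A. (-1)^m * f m) * (\<Sum>l\<in>B. (-1)^l * g l)) / 2"
proof -
  have "(\<Sum>m\<in>A. \<Sum>l\<in>B. if odd (m + l) then f m * g l else 0)
      = (\<Sum>m\<in>A. \<Sum>l\<in>B. (f m * g l - ((-1)^m * f m) * ((-1)^l * g l)) / 2)"
    by (intro sum.cong refl) (auto simp: power_add)
  also have "\<dots> = ((\<Sum>m\<in>A. \<Sum>l\<in>B. f m * g l) - (\<Sum>m\<in>A. \<Sum>l\<in>B. ((-1)^m * f m) * ((-1)^l * g l))) / 2"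
    by (simp add: sum_divide_distrib[symmetric] sum_subtractf)
  finally show ?thesis
    by (simp add: sum_product)
qed

section \<open>Discrete orthonormality at the Morrow-Patterson points\<close>

definition MP_weight :: "nat \<Rightarrow> nat \<times> nat \<Rightarrow> real" where
  "MP_weight n s = Cn n * (1 - (fst (MP_node n s))\<^sup>2) * (1 - (snd (MP_node n s))\<^sup>2)"

lemma finite_MP_idx [simp]: "finite (MP_idx n)"
  by (simp add: MP_idx_def)

lemma sum_MP_idx: "(\<Sum>s\<in>MP_idx n. g s) = (\<Sum>m=1..n+1. \<Sum>k=1..n div 2 + 1. g (m, k))"
  unfolding MP_idx_def sum.cartesian_product by simp

lemma sum_MP_y_parity:
  assumes "even n"
  shows "(\<Sum>k=1..n div 2 + 1. g (MP_y n m k))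
       = (\<Sum>l=1..n+2. if odd (m + l) then g (cos (real l * pi / real (n + 3))) else 0)"
proof -
  define r where "r = n div 2 + 1"
  have r: "n + 2 = 2 * r"
    using assms by (simp add: r_def)
  define h where "h l = g (cos (real l * pi / real (n + 3)))" for l
  show ?thesis
  proof (cases "odd m")
    case True
    then have "(\<Sum>l=1..n+2. if odd (m + l) then h l else 0) = (\<Sum>l=1..2*r. if even l then h l else 0)"
      unfolding r by (intro sum.cong refl) simp
    also have "\<dots> = (\<Sum>k=1..r. h (2 * k))"
      by (rule sum_even_indices)
    also have "\<dots> = (\<Sum>k=1..r. g (MP_y n m k))"
      using True by (simp add: h_def MP_y_def)
    finally show ?thesis
      unfolding h_def r_def by (rule sym)
  next
    case False
    then have "(\<Sum>l=1..n+2. if odd (m + l) then h l else 0) = (\<Sum>l=1..2*r. if odd l then h l else 0)"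
      unfolding r by (intro sum.cong refl) simp
    also have "\<dots> = (\<Sum>k=1..r. h (2 * k - 1))"
      by (rule sum_odd_indices)
    also have "\<dots> = (\<Sum>k=1..r. g (MP_y n m k))"
      using False by (intro sum.cong refl) (auto simp: h_def MP_y_def of_nat_diff)
    finally show ?thesis
      unfolding h_def r_def by (rule sym)
  qed
qed

lemma MP_sum_tensor_chebU_products:
  assumes "even n"
  shows "(\<Sum>s\<in>MP_idx n. MP_weight n s * (tensor chebU (i, j) (MP_node n s) * tensor chebU (i', j') (MP_node n s)))
    = Cn n * (sin_prod_sum (n+2) (Suc i) (Suc i') * sin_prod_sum (n+3) (Suc j) (Suc j')
        - sin_prod_sum (n+2) (Suc i + (n+2)) (Suc i') * sin_prod_sum (n+3) (Suc j + (n+3)) (Suc j')) / 2"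
proof -
  define F where "F v = (1 - v\<^sup>2) * (chebU i v * chebU i' v)" for v
  define G where "G v = (1 - v\<^sup>2) * (chebU j v * chebU j' v)" for v
  define x where "x m = cos (real m * pi / real (n + 2))" for m
  define y where "y l = cos (real l * pi / real (n + 3))" for l
  have parity: "(\<Sum>k=1..n div 2 + 1. F (x m) * G (MP_y n m k))
      = (\<Sum>l=1..n+2. if odd (m + l) then F (x m) * G (y l) else 0)" for m
    using sum_MP_y_parity[OF assms, of "\<lambda>v. F (x m) * G v" m] by (simp only: y_def)
  have "(\<Sum>s\<in>MP_idx n. MP_weight n s * (tensor chebU (i, j) (MP_node n s) * tensor chebU (i', j') (MP_node n s)))
      = Cn n * (\<Sum>m=1..n+1. \<Sum>k=1..n div 2 + 1. F (x m) * G (MP_y n m k))"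
    unfolding sum_MP_idx sum_distrib_left
    by (intro sum.cong refl) (simp add: MP_weight_def MP_node_def MP_x_def tensor_def F_def G_def x_def ac_simps)
  also have "\<dots> = Cn n * (\<Sum>m=1..n+1. \<Sum>l=1..n+2. if odd (m + l) then F (x m) * G (y l) else 0)"
    by (simp only: parity)
  also have "\<dots> = Cn n * ((\<Sum>m=1..n+1. F (x m)) * (\<Sum>l=1..n+2. G (y l))
      - (\<Sum>m=1..n+1. (-1)^m * F (x m)) * (\<Sum>l=1..n+2. (-1)^l * G (y l))) / 2"
    by (simp only: sum_odd_pairs_product times_divide_eq_right)
  also have "(\<Sum>m=1..n+1. F (x m)) = sin_prod_sum (n+2) (Suc i) (Suc i')"
    using sum_chebU_products_cos_nodes[of "n+2" i i'] by (simp add: F_def x_def)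
  also have "(\<Sum>m=1..n+1. (-1)^m * F (x m)) = sin_prod_sum (n+2) (Suc i + (n+2)) (Suc i')"
    using sum_alternating_chebU_products_cos_nodes[of "n+2" i i'] by (simp add: F_def x_def)
  also have "(\<Sum>l=1..n+2. G (y l)) = sin_prod_sum (n+3) (Suc j) (Suc j')"
    using sum_chebU_products_cos_nodes[of "n+3" j j'] by (simp add: G_def y_def)
  also have "(\<Sum>l=1..n+2. (-1)^l * G (y l)) = sin_prod_sum (n+3) (Suc j + (n+3)) (Suc j')"
    using sum_alternating_chebU_products_cos_nodes[of "n+3" j j'] by (simp add: G_def y_def)
  finally show ?thesis .
qed

lemma MP_sum_tensor_chebU_products_eq:
  assumes "even n" and "i + j + i' + j' \<le> 2 * n"
  shows "(\<Sum>s\<in>MP_idx n. MP_weight n s * (tensor chebU (i, j) (MP_node n s) * tensor chebU (i', j') (MP_node n s)))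
    = (if i = i' \<and> j = j' then 1 else 0)"
proof -
  have x: "sin_prod_sum (n+2) (Suc i) (Suc i') = (if i = i' then real (n+2) / 2 else 0)"
    and y: "sin_prod_sum (n+3) (Suc j) (Suc j') = (if j = j' then real (n+3) / 2 else 0)"
    using assms(2) by (simp_all add: sin_prod_sum_eq_if)
  have "Suc i + Suc i' < n + 2 \<or> Suc j + Suc j' < n + 3"
    using assms(2) by linarith
  then have "sin_prod_sum (n+2) (Suc i + (n+2)) (Suc i') = 0 \<or> sin_prod_sum (n+3) (Suc j + (n+3)) (Suc j') = 0"
    using sin_prod_sum_shift_eq_0[of "Suc i" "Suc i'" "n+2"] sin_prod_sum_shift_eq_0[of "Suc j" "Suc j'" "n+3"]
    by blast
  then have shifted: "sin_prod_sum (n+2) (Suc i + (n+2)) (Suc i') * sin_prod_sum (n+3) (Suc j + (n+3)) (Suc j') = 0"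
    by (simp only: mult_eq_0_iff)
  show ?thesis
    unfolding MP_sum_tensor_chebU_products[OF assms(1)] x y shifted by (simp add: Cn_def divide_simps)
qed

lemma MP_discrete_orthonormal:
  assumes "even n" and "a \<in> tri_idx n" and "b \<in> tri_idx n"
  shows "(\<Sum>s\<in>MP_idx n. MP_weight n s * tensor chebU a (MP_node n s) * tensor chebU b (MP_node n s))
    = (if a = b then 1 else 0)"
  using MP_sum_tensor_chebU_products_eq[OF assms(1), of "fst a" "snd a" "fst b" "snd b"] assms(2,3)
  by (simp add: mem_tri_idx_iff prod_eq_iff mult.assoc)

lemma MP_quadrature_tensor_chebU:
  assumes "even n" and "b \<in> tri_idx (2 * n)"
  shows "(\<Sum>s\<in>MP_idx n. MP_weight n s * tensor chebU b (MP_node n s)) = (if b = (0, 0) then 1 else 0)"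
  using MP_sum_tensor_chebU_products_eq[OF assms(1), of 0 0 "fst b" "snd b"] assms(2)
  by (auto simp: mem_tri_idx_iff prod_eq_iff tensor_def)

section \<open>The Chebyshev weight integral\<close>

text \<open>A primitive of \<open>t \<mapsto> -sin ((i+1) t) sin t\<close>; the case \<open>i = 0\<close> is separate because
  \<open>sin (0 * t) / 0\<close> would be the junk value \<open>0\<close> instead of \<open>t / 2\<close>.\<close>
definition chebU_sqrt_primitive :: "nat \<Rightarrow> real \<Rightarrow> real" where
  "chebU_sqrt_primitive i t = sin (real (i + 2) * t) / (2 * real (i + 2))
     - (if i = 0 then t / 2 else sin (real i * t) / (2 * real i))"

lemma has_real_derivative_chebU_sqrt_primitive:
  "(chebU_sqrt_primitive i has_real_derivative (cos (real (i + 2) * t) - cos (real i * t)) / 2) (at t)"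
proof (cases "i = 0")
  case True
  have "((\<lambda>t. sin (real (i + 2) * t) / (2 * real (i + 2)) - t / 2) has_real_derivative
        cos (real (i + 2) * t) * real (i + 2) / (2 * real (i + 2)) - 1 / 2) (at t)"
    by (auto intro!: derivative_eq_intros)
  then show ?thesis
    using True unfolding chebU_sqrt_primitive_def by (simp add: field_simps)
next
  case False
  have primitive: "chebU_sqrt_primitive i
      = (\<lambda>t. sin (real (i + 2) * t) / (2 * real (i + 2)) - sin (real i * t) / (2 * real i))"
    using False by (simp add: chebU_sqrt_primitive_def fun_eq_iff)
  have derivative: "(cos (real (i + 2) * t) - cos (real i * t)) / 2
      = cos (real (i + 2) * t) * real (i + 2) / (2 * real (i + 2)) - cos (real i * t) * real i / (2 * real i)"
    using False by (simp add: field_simps)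
  show ?thesis
    unfolding primitive derivative by (auto intro!: derivative_eq_intros)
qed

lemma continuous_on_chebU_sqrt_primitive: "continuous_on S (chebU_sqrt_primitive i)"
  using DERIV_isCont[OF has_real_derivative_chebU_sqrt_primitive]
  by (intro continuous_at_imp_continuous_on) blast

lemma has_real_derivative_chebU_sqrt_primitive_arccos:
  assumes "-1 < x" and "x < 1"
  shows "((\<lambda>x. chebU_sqrt_primitive i (arccos x)) has_real_derivative chebU i x * sqrt (1 - x\<^sup>2)) (at x)"
proof -
  let ?t = "arccos x"
  have "sin ?t = sqrt (1 - x\<^sup>2)" and "sqrt (1 - x\<^sup>2) > 0"
    using assms by (simp_all add: sin_arccos abs_square_less_1)
  moreover have "(cos (real (i + 2) * ?t) - cos (real i * ?t)) / 2 = - (sin (real (Suc i) * ?t) * sin ?t)"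
    using sin_times_sin[of "real (Suc i) * ?t" ?t] by (simp add: algebra_simps)
  moreover have "sin (real (Suc i) * ?t) = chebU i x * sin ?t"
    using chebU_cos_times_sin[of i ?t] assms by simp
  ultimately have derivative: "(cos (real (i + 2) * ?t) - cos (real i * ?t)) / 2 * inverse (- sqrt (1 - x\<^sup>2))
      = chebU i x * sqrt (1 - x\<^sup>2)"
    by (simp add: field_simps power2_eq_square)
  show ?thesis
    using DERIV_chain2[OF has_real_derivative_chebU_sqrt_primitive[of i] DERIV_arccos[OF assms]]
    unfolding derivative .
qed

lemma has_integral_chebU_sqrt:
  "((\<lambda>x. chebU i x * sqrt (1 - x\<^sup>2)) has_integral (if i = 0 then pi / 2 else 0)) {-1..1}"
proof -
  have "((\<lambda>x. chebU i x * sqrt (1 - x\<^sup>2)) has_integral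
      chebU_sqrt_primitive i (arccos 1) - chebU_sqrt_primitive i (arccos (-1))) {-1..1}"
  proof (rule fundamental_theorem_of_calculus_interior)
    show "continuous_on {-1..1} (\<lambda>x. chebU_sqrt_primitive i (arccos x))"
      using continuous_on_compose[of "{-1..1}" arccos "chebU_sqrt_primitive i"]
        continuous_on_arccos' continuous_on_chebU_sqrt_primitive
      by (simp add: comp_def)
  next
    fix x :: real assume "x \<in> {-1<..<1}"
    then show "((\<lambda>x. chebU_sqrt_primitive i (arccos x)) has_vector_derivative chebU i x * sqrt (1 - x\<^sup>2)) (at x)"
      using has_real_derivative_chebU_sqrt_primitive_arccos[of x i]
      by (simp add: has_real_derivative_iff_has_vector_derivative)
  qed simp
  moreover have "sin (real (i + 2) * pi) = 0" and "sin (real i * pi) = 0"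
    by (rule sin_npi)+
  ultimately show ?thesis
    unfolding chebU_sqrt_primitive_def by auto
qed

lemma integral_tensor_chebU_sqrt:
  "integral Q (\<lambda>z. tensor chebU b z * sqrt (1 - (fst z)\<^sup>2) * sqrt (1 - (snd z)\<^sup>2))
    = (if b = (0, 0) then pi\<^sup>2 / 4 else 0)"
proof -
  let ?f = "\<lambda>x. chebU (fst b) x * sqrt (1 - x\<^sup>2)" and ?g = "\<lambda>y. chebU (snd b) y * sqrt (1 - y\<^sup>2)"
  have "continuous_on (cbox (-1, -1) (1, 1)) (\<lambda>z::real \<times> real. ?f (fst z) * ?g (snd z))"
    by (intro continuous_intros)
  then have "integral Q (\<lambda>z. ?f (fst z) * ?g (snd z))
      = integral (cbox (-1) 1) (\<lambda>x. integral (cbox (-1) 1) (\<lambda>y. ?f x * ?g y))"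
    unfolding Q_def by (simp add: integral_prod_continuous)
  also have "\<dots> = integral {-1..1} ?f * integral {-1..1} ?g"
    by (simp add: cbox_interval)
  also have "\<dots> = (if b = (0, 0) then pi\<^sup>2 / 4 else 0)"
    using has_integral_chebU_sqrt[of "fst b"] has_integral_chebU_sqrt[of "snd b"]
    by (auto simp: integral_unique prod_eq_iff power2_eq_square)
  finally show ?thesis
    by (simp add: tensor_def ac_simps)
qed

lemma weighted_integral_tensor_span:
  assumes p: "\<And>z. p z = (\<Sum>b\<in>tri_idx d. c b * tensor chebU b z)"
  shows "4 / pi\<^sup>2 * integral Q (\<lambda>(x, y). p (x, y) * sqrt (1 - x\<^sup>2) * sqrt (1 - y\<^sup>2)) = c (0, 0)"
proof -
  let ?w = "\<lambda>b z. tensor chebU b z * sqrt (1 - (fst z)\<^sup>2) * sqrt (1 - (snd z)\<^sup>2)"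
  have "(\<lambda>(x, y). p (x, y) * sqrt (1 - x\<^sup>2) * sqrt (1 - y\<^sup>2)) = (\<lambda>z. \<Sum>b\<in>tri_idx d. c b * ?w b z)"
    by (simp add: fun_eq_iff p sum_distrib_left sum_distrib_right ac_simps)
  moreover have "(\<lambda>z. c b * ?w b z) integrable_on Q" for b
    unfolding Q_def tensor_def by (intro integrable_continuous continuous_intros)
  ultimately have "integral Q (\<lambda>(x, y). p (x, y) * sqrt (1 - x\<^sup>2) * sqrt (1 - y\<^sup>2))
      = (\<Sum>b\<in>tri_idx d. c b * integral Q (?w b))"
    by (simp add: integral_sum integral_mult_right)
  also have "\<dots> = c (0, 0) * (pi\<^sup>2 / 4)"
    by (simp add: integral_tensor_chebU_sqrt mem_tri_idx_iff if_distrib[of "\<lambda>x. _ * x"] cong: if_cong)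
  finally show ?thesis
    by (simp add: divide_simps)
qed

lemma MP_sum_tensor_span:
  assumes "even n" and p: "\<And>z. p z = (\<Sum>b\<in>tri_idx (2 * n). c b * tensor chebU b z)"
  shows "(\<Sum>s\<in>MP_idx n. MP_weight n s * p (MP_node n s)) = c (0, 0)"
proof -
  have "(\<Sum>s\<in>MP_idx n. MP_weight n s * p (MP_node n s))
      = (\<Sum>b\<in>tri_idx (2 * n). c b * (\<Sum>s\<in>MP_idx n. MP_weight n s * tensor chebU b (MP_node n s)))"
    unfolding p sum_distrib_left by (subst sum.swap) (simp add: ac_simps)
  also have "\<dots> = (\<Sum>b\<in>tri_idx (2 * n). c b * (if b = (0, 0) then 1 else 0))"
    by (intro sum.cong refl) (simp add: MP_quadrature_tensor_chebU[OF assms(1)])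
  also have "\<dots> = c (0, 0)"
    by (simp add: mem_tri_idx_iff if_distrib[of "\<lambda>x. _ * x"] cong: if_cong)
  finally show ?thesis .
qed

lemma MP_cubature:
  assumes "even n" and "p \<in> poly2 (2 * n)"
  shows "4 / pi\<^sup>2 * integral Q (\<lambda>(x, y). p (x, y) * sqrt (1 - x\<^sup>2) * sqrt (1 - y\<^sup>2))
       = Cn n * (\<Sum>m = 1..n+1. \<Sum>k = 1..n div 2 + 1.
            (1 - (MP_x n m)\<^sup>2) * (1 - (MP_y n m k)\<^sup>2) * p (MP_x n m, MP_y n m k))"
proof -
  obtain c where c: "\<And>z. p z = (\<Sum>b\<in>tri_idx (2 * n). c b * tensor chebU b z)"
    using assms(2) unfolding poly2_eq_tensor_span_chebU tensor_span_def by blast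
  have "Cn n * (\<Sum>m = 1..n+1. \<Sum>k = 1..n div 2 + 1.
            (1 - (MP_x n m)\<^sup>2) * (1 - (MP_y n m k)\<^sup>2) * p (MP_x n m, MP_y n m k))
      = (\<Sum>s\<in>MP_idx n. MP_weight n s * p (MP_node n s))"
    unfolding sum_MP_idx sum_distrib_left
    by (intro sum.cong refl) (simp add: MP_weight_def MP_node_def)
  then show ?thesis
    using weighted_integral_tensor_span[OF c] MP_sum_tensor_span[OF assms(1) c] by simp
qed

section \<open>The Lagrange property and interpolation\<close>

lemma sum_left_inverse_imp_right_inverse:
  fixes P :: "'b \<Rightarrow> 's \<Rightarrow> real" and Q :: "'s \<Rightarrow> 'b \<Rightarrow> real"
  assumes fB: "finite B" and fS: "finite S" and card: "card B = card S"
    and left: "\<And>a b. a \<in> B \<Longrightarrow> b \<in> B \<Longrightarrow> (\<Sum>s\<in>S. P a s * Q s b) = (if a = b then 1 else 0)"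
    and s: "s \<in> S" and t: "t \<in> S"
  shows "(\<Sum>a\<in>B. Q s a * P a t) = (if s = t then 1 else 0)"
proof -
  define N where "N = card B"
  obtain hB where hB: "bij_betw hB {0..<N} B" using ex_bij_betw_nat_finite[OF fB] N_def by blast
  obtain hS where hS: "bij_betw hS {0..<N} S" using ex_bij_betw_nat_finite[OF fS] N_def card by auto
  define A where "A = Matrix.mat N N (\<lambda>(i, j). P (hB i) (hS j))"
  define C where "C = Matrix.mat N N (\<lambda>(i, j). Q (hS i) (hB j))"
  have "A * C = 1\<^sub>m N"
  proof (rule eq_matI)
    fix i j assume "i < dim_row (1\<^sub>m N :: real Matrix.mat)" and "j < dim_col (1\<^sub>m N :: real Matrix.mat)"
    then have i: "i < N" and j: "j < N" by auto
    have "(A * C) $$ (i, j) = (\<Sum>k\<in>{0..<N}. P (hB i) (hS k) * Q (hS k) (hB j))"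
      using i j by (simp add: A_def C_def scalar_prod_def)
    also have "\<dots> = (\<Sum>s\<in>S. P (hB i) s * Q s (hB j))"
      by (rule sum.reindex_bij_betw[OF hS])
    also have "\<dots> = (if hB i = hB j then 1 else 0)"
      by (rule left) (use i j bij_betwE[OF hB] in auto)
    also have "(hB i = hB j) = (i = j)"
      using bij_betw_imp_inj_on[OF hB] i j by (auto simp: inj_on_def)
    finally show "(A * C) $$ (i, j) = 1\<^sub>m N $$ (i, j)"
      using i j by simp
  qed (simp_all add: A_def C_def)
  then have CA: "C * A = 1\<^sub>m N"
    by (rule mat_mult_left_right_inverse[rotated 2]) (simp_all add: A_def C_def)
  obtain i where i: "i < N" "hS i = s" using s hS by (metis atLeastLessThan_iff bij_betw_iff_bijections)
  obtain j where j: "j < N" "hS j = t" using t hS by (metis atLeastLessThan_iff bij_betw_iff_bijections)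
  have "(\<Sum>a\<in>B. Q s a * P a t) = (\<Sum>k\<in>{0..<N}. Q (hS i) (hB k) * P (hB k) (hS j))"
    unfolding i(2) j(2) by (rule sum.reindex_bij_betw[OF hB, symmetric])
  also have "\<dots> = (C * A) $$ (i, j)"
    using i j by (simp add: A_def C_def scalar_prod_def)
  also have "\<dots> = (if i = j then 1 else 0)"
    unfolding CA using i j by simp
  also have "(i = j) = (s = t)"
    using bij_betw_imp_inj_on[OF hS] i j by (auto simp: inj_on_def)
  finally show ?thesis .
qed

lemma card_tri_idx: "2 * card (tri_idx n) = (n + 1) * (n + 2)"
proof -
  have "card (tri_idx n) = (\<Sum>i\<le>n. n - i + 1)"
    by (simp add: tri_idx_def card_SigmaI)
  also have "\<dots> = (\<Sum>i\<le>n. i + 1)"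
    by (rule sum.reindex_bij_witness[where i = "\<lambda>i. n - i" and j = "\<lambda>i. n - i"]) auto
  finally have "card (tri_idx n) = (\<Sum>i\<le>n. i + 1)" .
  moreover have "2 * (\<Sum>i\<le>m. i + 1) = (m + 1) * (m + 2)" for m :: nat
    by (induction m) auto
  ultimately show ?thesis
    by simp
qed

lemma card_MP_idx_eq_card_tri_idx:
  assumes "even n"
  shows "card (MP_idx n) = card (tri_idx n)"
proof -
  have "2 * card (MP_idx n) = (n + 1) * (n + 2)"
    using assms by (auto simp: MP_idx_def card_cartesian_product elim!: evenE)
  then show ?thesis
    using card_tri_idx[of n] by simp
qed

lemma MP_weight_Kn_nodes:
  assumes "even n" and "s \<in> MP_idx n" and "t \<in> MP_idx n"
  shows "MP_weight n t * Kn n (MP_node n t) (MP_node n s) = (if s = t then 1 else 0)"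
proof -
  have "(\<Sum>a\<in>tri_idx n. tensor chebU a (MP_node n s) * (MP_weight n t * tensor chebU a (MP_node n t)))
      = (if s = t then 1 else 0)"
    using MP_discrete_orthonormal[OF assms(1)]
    by (intro sum_left_inverse_imp_right_inverse[where B = "tri_idx n" and S = "MP_idx n"])
       (simp_all add: assms card_MP_idx_eq_card_tri_idx mult.assoc)
  then show ?thesis
    by (simp add: Kn_eq_sum_tensor_chebU sum_distrib_left ac_simps)
qed

lemma MP_reproducing:
  assumes "even n" and "p \<in> poly2 n"
  shows "p z = (\<Sum>t\<in>MP_idx n. MP_weight n t * p (MP_node n t) * Kn n (MP_node n t) z)"
proof -
  have basis: "(\<Sum>t\<in>MP_idx n. MP_weight n t * tensor chebU b (MP_node n t) * Kn n (MP_node n t) z)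
      = tensor chebU b z" if "b \<in> tri_idx n" for b
  proof -
    have "(\<Sum>t\<in>MP_idx n. MP_weight n t * tensor chebU b (MP_node n t) * Kn n (MP_node n t) z)
        = (\<Sum>a\<in>tri_idx n. tensor chebU a z
            * (\<Sum>t\<in>MP_idx n. MP_weight n t * tensor chebU b (MP_node n t) * tensor chebU a (MP_node n t)))"
      unfolding Kn_eq_sum_tensor_chebU sum_distrib_left by (subst sum.swap) (simp add: ac_simps)
    also have "\<dots> = (\<Sum>a\<in>tri_idx n. tensor chebU a z * (if b = a then 1 else 0))"
      using that by (intro sum.cong refl) (simp add: MP_discrete_orthonormal[OF assms(1)])
    also have "\<dots> = tensor chebU b z"
      using that by (simp add: if_distrib[of "\<lambda>x. _ * x"] cong: if_cong)
    finally show ?thesis .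
  qed
  obtain c where c: "\<And>z. p z = (\<Sum>b\<in>tri_idx n. c b * tensor chebU b z)"
    using assms(2) unfolding poly2_eq_tensor_span_chebU tensor_span_def by blast
  have "(\<Sum>t\<in>MP_idx n. MP_weight n t * p (MP_node n t) * Kn n (MP_node n t) z)
      = (\<Sum>b\<in>tri_idx n. c b * (\<Sum>t\<in>MP_idx n. MP_weight n t * tensor chebU b (MP_node n t) * Kn n (MP_node n t) z))"
    unfolding c sum_distrib_left sum_distrib_right by (subst sum.swap) (simp add: ac_simps)
  also have "\<dots> = p z"
    by (simp add: basis c)
  finally show ?thesis ..
qed

lemma Ln_eq_sum_MP_weight:
  "Ln n f z = (\<Sum>t\<in>MP_idx n. MP_weight n t * f (MP_node n t) * Kn n (MP_node n t) z)"
  unfolding Ln_def MP_weight_def sum_distrib_left by (simp add: ac_simps)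

lemma Ln_in_poly2: "Ln n f \<in> poly2 n"
proof -
  have "(\<lambda>z. \<Sum>t\<in>MP_idx n. (MP_weight n t * f (MP_node n t)) * Kn n (MP_node n t) z) \<in> tensor_span chebU n"
    using Kn_in_poly2 unfolding poly2_eq_tensor_span_chebU by (intro tensor_span_linear_combination) auto
  then show ?thesis
    unfolding poly2_eq_tensor_span_chebU by (simp add: Ln_eq_sum_MP_weight[abs_def])
qed

lemma Ln_interpolates:
  assumes "even n" and "s \<in> MP_idx n"
  shows "Ln n f (MP_node n s) = f (MP_node n s)"
proof -
  have "Ln n f (MP_node n s)
      = (\<Sum>t\<in>MP_idx n. f (MP_node n t) * (MP_weight n t * Kn n (MP_node n t) (MP_node n s)))"
    unfolding Ln_eq_sum_MP_weight by (simp add: ac_simps)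
  also have "\<dots> = f (MP_node n s)"
    using assms by (simp add: MP_weight_Kn_nodes if_distrib[of "\<lambda>x. _ * x"] cong: if_cong)
  finally show ?thesis .
qed

lemma omega_eq_MP_weight:
  assumes "even n" and "s \<in> MP_idx n"
  shows "omega n s = MP_weight n s"
proof -
  have "omega n s = 1 / Kn n (MP_node n s) (MP_node n s)"
    by (simp add: omega_def Kn_def power2_eq_square ac_simps)
  moreover have "MP_weight n s * Kn n (MP_node n s) (MP_node n s) = 1"
    using MP_weight_Kn_nodes[OF assms(1,2,2)] by simp
  ultimately show ?thesis
    by (metis div_by_1 nonzero_mult_div_cancel_right mult_zero_right zero_neq_one)
qed

lemma MP_weight_nonneg: "MP_weight n s \<ge> 0"
proof -
  have "(cos t)\<^sup>2 \<le> 1" for t :: real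
    by (simp add: abs_square_le_1)
  then show ?thesis
    unfolding MP_weight_def MP_node_def MP_x_def MP_y_def Cn_def
    by (intro mult_nonneg_nonneg) (simp_all add: diff_le_eq)
qed

lemma lagrange_basis_MP_weight_Kn:
  assumes "even n"
  shows "lagrange_basis n (\<lambda>s z. MP_weight n s * Kn n (MP_node n s) z)"
  unfolding lagrange_basis_def
proof (intro conjI ballI)
  fix s
  show "(\<lambda>z. MP_weight n s * Kn n (MP_node n s) z) \<in> poly2 n"
    using Kn_in_poly2 tensor_span_scale unfolding poly2_eq_tensor_span_chebU by blast
next
  fix s t assume "s \<in> MP_idx n" and "t \<in> MP_idx n"
  then show "MP_weight n s * Kn n (MP_node n s) (MP_node n t) = (if s = t then 1 else 0)"
    using MP_weight_Kn_nodes[OF assms] by auto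
qed

lemma lagrange_basis_eq:
  assumes "even n" and l: "lagrange_basis n l" and s: "s \<in> MP_idx n"
  shows "l s z = MP_weight n s * Kn n (MP_node n s) z"
proof -
  have "l s \<in> poly2 n"
    using l s unfolding lagrange_basis_def by blast
  then have "l s z = (\<Sum>t\<in>MP_idx n. MP_weight n t * l s (MP_node n t) * Kn n (MP_node n t) z)"
    by (rule MP_reproducing[OF assms(1)])
  also have "\<dots> = MP_weight n s * Kn n (MP_node n s) z"
    using l s by (simp add: lagrange_basis_def if_distrib[of "\<lambda>x. _ * x"] if_distrib[of "\<lambda>x. x * _"] cong: if_cong)
  finally show ?thesis .
qed

lemma lebesgue_fun_eq:
  assumes "even n" and "lagrange_basis n l"
  shows "lebesgue_fun n l z = Cn n * (\<Sum>s \<in> MP_idx n.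
            (1 - (fst (MP_node n s))\<^sup>2) * (1 - (snd (MP_node n s))\<^sup>2) * \<bar>Kn n (MP_node n s) z\<bar>)"
proof -
  have "lebesgue_fun n l z = (\<Sum>s\<in>MP_idx n. MP_weight n s * \<bar>Kn n (MP_node n s) z\<bar>)"
    unfolding lebesgue_fun_def
    by (intro sum.cong refl) (simp add: lagrange_basis_eq[OF assms] abs_mult MP_weight_nonneg)
  then show ?thesis
    by (simp add: MP_weight_def sum_distrib_left ac_simps)
qed

theorem theorem4:
  fixes n :: nat
  assumes "n > 0" and "even n"
  shows
   "(\<forall>p \<in> poly2 (2 * n).
       4 / pi\<^sup>2 * integral Q (\<lambda>(x, y). p (x, y) * sqrt (1 - x\<^sup>2) * sqrt (1 - y\<^sup>2))
       = Cn n * (\<Sum>m = 1..n+1. \<Sum>k = 1..n div 2 + 1.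
            (1 - (MP_x n m)\<^sup>2) * (1 - (MP_y n m k)\<^sup>2) * p (MP_x n m, MP_y n m k)))
    \<and> (\<forall>s \<in> MP_idx n.
         omega n s = Cn n * (1 - (fst (MP_node n s))\<^sup>2) * (1 - (snd (MP_node n s))\<^sup>2))
    \<and> (\<forall>f. continuous_on Q f \<longrightarrow>
         Ln n f \<in> poly2 n
         \<and> (\<forall>p \<in> poly2 n. dip n (\<lambda>z. f z - Ln n f z) p = 0)
         \<and> (\<forall>s \<in> MP_idx n. Ln n f (MP_node n s) = f (MP_node n s)))
    \<and> (\<exists>l. lagrange_basis n l)
    \<and> (\<forall>l. lagrange_basis n l \<longrightarrow> (\<forall>z.
         lebesgue_fun n l z = Cn n * (\<Sum>s \<in> MP_idx n.
            (1 - (fst (MP_node n s))\<^sup>2) * (1 - (snd (MP_node n s))\<^sup>2)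
            * \<bar>Kn n (MP_node n s) z\<bar>)))"
proof (intro conjI allI impI ballI exI)
  show "4 / pi\<^sup>2 * integral Q (\<lambda>(x, y). p (x, y) * sqrt (1 - x\<^sup>2) * sqrt (1 - y\<^sup>2))
       = Cn n * (\<Sum>m = 1..n+1. \<Sum>k = 1..n div 2 + 1.
            (1 - (MP_x n m)\<^sup>2) * (1 - (MP_y n m k)\<^sup>2) * p (MP_x n m, MP_y n m k))"
    if "p \<in> poly2 (2 * n)" for p
    using MP_cubature[OF assms(2) that] .
  show "omega n s = Cn n * (1 - (fst (MP_node n s))\<^sup>2) * (1 - (snd (MP_node n s))\<^sup>2)"
    if "s \<in> MP_idx n" for s
    using omega_eq_MP_weight[OF assms(2) that] by (simp add: MP_weight_def)
  show "Ln n f \<in> poly2 n" for f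
    by (rule Ln_in_poly2)
  show "Ln n f (MP_node n s) = f (MP_node n s)" if "s \<in> MP_idx n" for f s
    using Ln_interpolates[OF assms(2) that] .
  then show "dip n (\<lambda>z. f z - Ln n f z) p = 0" for f p
    by (simp add: dip_def)
  show "lagrange_basis n (\<lambda>s z. MP_weight n s * Kn n (MP_node n s) z)"
    using lagrange_basis_MP_weight_Kn[OF assms(2)] .
  show "lebesgue_fun n l z = Cn n * (\<Sum>s \<in> MP_idx n.
            (1 - (fst (MP_node n s))\<^sup>2) * (1 - (snd (MP_node n s))\<^sup>2) * \<bar>Kn n (MP_node n s) z\<bar>)"
    if "lagrange_basis n l" for l z
    using lebesgue_fun_eq[OF assms(2) that] .
qed

end
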